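(* Let $k\ge 2$ and let $P=(p_1,\dots,p_k)$ and $Q=(q_1,\dots,q_k)$ be two multinomial (categorical) probability distributions over the same index set $\{1,\dots,k\}$. Suppose the indices of the largest probabilities of $P$ and $Q$ do not match, i.e. $\arg\max_i p_i \neq \arg\max_j q_j$. Then $$d_{H^2}(Q,P)\;\ge\; 1-\sqrt{\frac{2-\bigl(\sqrt{p_{(1)}}-\sqrt{p_{(2)}}\bigr)^2}{2}},$$ where $p_{(1)}$ and $p_{(2)}$ denote the first and second largest probabilities among $p_1,\dots,p_k$.
   Context: The squared Hellinger distance is $d_{H^2}(Q,P)=1-\sum_{i=1}^k\sqrt{p_iq_i}=\frac12\sum_{i=1}^k(\sqrt{p_i}-\sqrt{q_i})^2$. *)

theory Defs
  imports Complex_Main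
begin

definition is_distribution :: "nat \<Rightarrow> (nat \<Rightarrow> real) \<Rightarrow> bool" where
  "is_distribution k p \<longleftrightarrow> (\<forall>i\<in>{1..k}. 0 \<le> p i) \<and> (\<Sum>i=1..k. p i) = 1"

definition hellinger_sq :: "nat \<Rightarrow> (nat \<Rightarrow> real) \<Rightarrow> (nat \<Rightarrow> real) \<Rightarrow> real" where
  "hellinger_sq k q p = 1 - (\<Sum>i=1..k. sqrt (p i * q i))"

text \<open>The arg max of p over {1..k}, as a set (to handle ties).\<close>
definition argmax_set :: "nat \<Rightarrow> (nat \<Rightarrow> real) \<Rightarrow> nat set" where
  "argmax_set k p = {i \<in> {1..k}. \<forall>j\<in>{1..k}. p j \<le> p i}"

text \<open>Order statistics: ord_stat k p m is the m-th largest value (m = 1, 2, ...)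
  among p 1, ..., p k (counted with multiplicity).\<close>
definition ord_stat :: "nat \<Rightarrow> (nat \<Rightarrow> real) \<Rightarrow> nat \<Rightarrow> real" where
  "ord_stat k p m = rev (sort (map p [1..<k+1])) ! (m - 1)"

end

theory Submission
  imports Defs "HOL-Analysis.Convex"
begin

text \<open>Put \<open>x = \<surd>p\<close> and \<open>y = \<surd>q\<close>: nonnegative unit vectors with
  \<open>1 - d\<^sub>H\<^sub>2(Q,P) = \<Sum>\<^sub>l x\<^sub>l y\<^sub>l\<close>. As the arg max sets differ, there are \<open>i \<noteq> j\<close> with \<open>i\<close> an
  arg max of \<open>p\<close> and \<open>q\<^sub>i \<le> q\<^sub>j\<close>, so \<open>(x\<^sub>i, x\<^sub>j)\<close> and \<open>(y\<^sub>i, y\<^sub>j)\<close> are oppositely ordered.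
  By Chebyshev's sum inequality \<open>x\<^sub>i y\<^sub>i + x\<^sub>j y\<^sub>j \<le> (x\<^sub>i + x\<^sub>j)(y\<^sub>i + y\<^sub>j)/2\<close>, so both pairs may
  be replaced by their averages; Cauchy-Schwarz then bounds \<open>\<Sum>\<^sub>l x\<^sub>l y\<^sub>l\<close> by the norm of the
  averaged \<open>x\<close>, which is \<open>\<surd>(1 - (x\<^sub>i - x\<^sub>j)\<^sup>2/2)\<close>. Finally \<open>p\<^sub>i = p\<^sub>(1)\<close> and \<open>p\<^sub>j \<le> p\<^sub>(2)\<close>,
  so \<open>x\<^sub>i - x\<^sub>j \<ge> \<surd>p\<^sub>(1) - \<surd>p\<^sub>(2) \<ge> 0\<close>.\<close>

lemma opposite_pairs_inner_le:
  fixes a b c d A B :: real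
  assumes "0 \<le> b" "b \<le> a" "0 \<le> c" "c \<le> d" "0 \<le> A" "0 \<le> B"
    and "a\<^sup>2 + b\<^sup>2 + A\<^sup>2 = 1" "c\<^sup>2 + d\<^sup>2 + B\<^sup>2 = 1"
  shows "a * c + b * d + A * B \<le> sqrt (1 - (a - b)\<^sup>2 / 2)"
proof -
  define u where "u = (a + b) / sqrt 2"
  define v where "v = (c + d) / sqrt 2"
  have chebyshev: "a * c + b * d \<le> u * v"
  proof -
    have "(a - b) * (c - d) \<le> 0"
      using assms by (simp add: mult_nonneg_nonpos)
    then show ?thesis
      unfolding u_def v_def by (simp add: algebra_simps)
  qed
  have u_norm: "u\<^sup>2 + A\<^sup>2 = 1 - (a - b)\<^sup>2 / 2"
    using assms(7) unfolding u_def by (simp add: power_divide power2_eq_square field_simps)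
  have "v\<^sup>2 + B\<^sup>2 = 1 - (c - d)\<^sup>2 / 2"
    using assms(8) unfolding v_def by (simp add: power_divide power2_eq_square field_simps)
  then have v_norm: "v\<^sup>2 + B\<^sup>2 \<le> 1"
    by simp
  have "(u * v + A * B)\<^sup>2 \<le> (u\<^sup>2 + A\<^sup>2) * (v\<^sup>2 + B\<^sup>2)"
    using zero_le_power2[of "u * B - v * A"] by (simp add: power2_eq_square algebra_simps)
  also have "\<dots> \<le> u\<^sup>2 + A\<^sup>2"
    using v_norm by (simp add: mult_left_le)
  finally have "u * v + A * B \<le> sqrt (1 - (a - b)\<^sup>2 / 2)"
    unfolding u_norm by (rule real_le_rsqrt)
  with chebyshev show ?thesis by linarith
qed

lemma sum_remove_two:
  assumes "finite S" "i \<in> S" "j \<in> S" "i \<noteq> j"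
  shows "sum f S = f i + f j + sum f (S - {i, j})"
proof -
  have "sum f S = f i + sum f (S - {i})"
    using assms by (simp add: sum.remove)
  also have "sum f (S - {i}) = f j + sum f (S - {i} - {j})"
    using assms by (simp add: sum.remove)
  moreover have "S - {i} - {j} = S - {i, j}"
    by auto
  ultimately show ?thesis
    by (simp add: add.assoc)
qed

lemma unit_vectors_inner_le_opposite_pair:
  fixes x y :: "'a \<Rightarrow> real"
  assumes "finite S" "\<And>l. l \<in> S \<Longrightarrow> 0 \<le> x l" "\<And>l. l \<in> S \<Longrightarrow> 0 \<le> y l"
    and x_unit: "(\<Sum>l\<in>S. (x l)\<^sup>2) = 1" and y_unit: "(\<Sum>l\<in>S. (y l)\<^sup>2) = 1"
    and ij: "i \<in> S" "j \<in> S" "i \<noteq> j" and "x j \<le> x i" "y i \<le> y j"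
  shows "(\<Sum>l\<in>S. x l * y l) \<le> sqrt (1 - (x i - x j)\<^sup>2 / 2)"
proof -
  let ?R = "S - {i, j}"
  define A where "A = sqrt (\<Sum>l\<in>?R. (x l)\<^sup>2)"
  define B where "B = sqrt (\<Sum>l\<in>?R. (y l)\<^sup>2)"
  have split: "sum f S = f i + f j + sum f ?R" for f :: "'a \<Rightarrow> real"
    using assms(1) ij by (rule sum_remove_two)
  have A_sq: "A\<^sup>2 = (\<Sum>l\<in>?R. (x l)\<^sup>2)" and B_sq: "B\<^sup>2 = (\<Sum>l\<in>?R. (y l)\<^sup>2)"
    unfolding A_def B_def by (simp_all add: sum_nonneg)
  have rest_le: "(\<Sum>l\<in>?R. x l * y l) \<le> A * B"
  proof -
    have "(\<Sum>l\<in>?R. x l * y l)\<^sup>2 \<le> (A * B)\<^sup>2"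
      unfolding power_mult_distrib A_sq B_sq by (rule Cauchy_Schwarz_ineq_sum)
    then show ?thesis
      by (rule power2_le_imp_le) (simp add: A_def B_def sum_nonneg)
  qed
  have "x i * y i + x j * y j + A * B \<le> sqrt (1 - (x i - x j)\<^sup>2 / 2)"
  proof (rule opposite_pairs_inner_le)
    show "(x i)\<^sup>2 + (x j)\<^sup>2 + A\<^sup>2 = 1" "(y i)\<^sup>2 + (y j)\<^sup>2 + B\<^sup>2 = 1"
      using x_unit y_unit split[of "\<lambda>l. (x l)\<^sup>2"] split[of "\<lambda>l. (y l)\<^sup>2"] A_sq B_sq by simp_all
  qed (use assms in \<open>simp_all add: A_def B_def sum_nonneg\<close>)
  then show ?thesis
    using split[of "\<lambda>l. x l * y l"] rest_le by linarith
qed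

lemma bhattacharyya_le_opposite_pair:
  assumes p: "is_distribution k p" and q: "is_distribution k q"
    and "i \<in> {1..k}" "j \<in> {1..k}" "i \<noteq> j" "p j \<le> p i" "q i \<le> q j"
  shows "(\<Sum>l=1..k. sqrt (p l * q l)) \<le> sqrt (1 - (sqrt (p i) - sqrt (p j))\<^sup>2 / 2)"
proof -
  have p_nonneg: "\<And>l. l \<in> {1..k} \<Longrightarrow> 0 \<le> p l" and q_nonneg: "\<And>l. l \<in> {1..k} \<Longrightarrow> 0 \<le> q l"
    using p q unfolding is_distribution_def by auto
  have "(\<Sum>l=1..k. sqrt (p l * q l)) = (\<Sum>l\<in>{1..k}. sqrt (p l) * sqrt (q l))"
    by (simp add: real_sqrt_mult)
  also have "\<dots> \<le> sqrt (1 - (sqrt (p i) - sqrt (p j))\<^sup>2 / 2)"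
  proof (rule unit_vectors_inner_le_opposite_pair)
    show "(\<Sum>l\<in>{1..k}. (sqrt (p l))\<^sup>2) = 1" "(\<Sum>l\<in>{1..k}. (sqrt (q l))\<^sup>2) = 1"
      using p q p_nonneg q_nonneg unfolding is_distribution_def by simp_all
  qed (use assms p_nonneg q_nonneg in auto)
  finally show ?thesis .
qed

lemma argmax_set_nonempty:
  assumes "1 \<le> k"
  shows "argmax_set k p \<noteq> {}"
proof -
  have "Max (p ` {1..k}) \<in> p ` {1..k}"
    using assms by (intro Max_in) auto
  then obtain i where "i \<in> {1..k}" "p i = Max (p ` {1..k})"
    by (metis imageE)
  then have "i \<in> argmax_set k p"
    unfolding argmax_set_def by simp
  then show ?thesis
    by blast
qed

lemma argmax_set_mismatch:
  assumes "1 \<le> k" and "argmax_set k p \<noteq> argmax_set k q"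
  obtains i j where "i \<in> argmax_set k p" "j \<in> {1..k}" "j \<noteq> i" "q i \<le> q j"
proof (cases "argmax_set k p \<subseteq> argmax_set k q")
  case True
  then obtain j where j: "j \<in> argmax_set k q" "j \<notin> argmax_set k p"
    using assms(2) by blast
  obtain i where i: "i \<in> argmax_set k p"
    using argmax_set_nonempty[OF assms(1)] by blast
  with True j show ?thesis
    by (intro that[of i j]) (auto simp: argmax_set_def)
next
  case False
  then obtain i where i: "i \<in> argmax_set k p" "i \<notin> argmax_set k q"
    by blast
  obtain j where j: "j \<in> argmax_set k q"
    using argmax_set_nonempty[OF assms(1)] by blast
  with i show ?thesis
    by (intro that[of i j]) (auto simp: argmax_set_def)
qed

lemma sorted_nth_ge_if_length_filter_ge:
  fixes s :: "'a::linorder list"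
  assumes "sorted s" "1 \<le> m" "m \<le> length (filter (\<lambda>u. v \<le> u) s)"
  shows "v \<le> s ! (length s - m)"
proof (rule ccontr)
  assume below: "\<not> v \<le> s ! (length s - m)"
  have "length s - m < l" if "l < length s" "v \<le> s ! l" for l
  proof (rule ccontr)
    assume "\<not> length s - m < l"
    then have "s ! l \<le> s ! (length s - m)"
      using assms(1,2) that(1) by (intro sorted_nth_mono) auto
    with below that(2) show False
      by simp
  qed
  then have "{l. l < length s \<and> v \<le> s ! l} \<subseteq> {length s - m <..< length s}"
    by auto
  then have "card {l. l < length s \<and> v \<le> s ! l} \<le> card {length s - m <..< length s}"
    by (intro card_mono) auto
  moreover have "m \<le> length s"
    using assms(3) length_filter_le[of _ s] by (rule order.trans)
  ultimately show False
    using assms(2,3) by (simp add: length_filter_conv_card)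
qed

lemma ord_stat_eq_nth_sort:
  assumes "1 \<le> m" "m \<le> k"
  shows "ord_stat k p m = sort (map p [1..<k+1]) ! (k - m)"
  using assms by (simp add: ord_stat_def rev_nth Suc_diff_le)

lemma ord_stat_in_image:
  assumes "1 \<le> m" "m \<le> k"
  shows "ord_stat k p m \<in> p ` {1..k}"
proof -
  have "sort (map p [1..<k+1]) ! (k - m) \<in> set (sort (map p [1..<k+1]))"
    using assms by (intro nth_mem) simp
  then show ?thesis
    using assms by (simp add: ord_stat_eq_nth_sort atLeastLessThanSuc_atLeastAtMost del: upt_Suc)
qed

lemma ord_stat_ge:
  assumes "1 \<le> m" "m \<le> card {l \<in> {1..k}. v \<le> p l}"
  shows "v \<le> ord_stat k p m"
proof -
  let ?s = "sort (map p [1..<k+1])"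
  have "length (filter (\<lambda>u. v \<le> u) ?s) = length (filter (\<lambda>l. v \<le> p l) [1..<k+1])"
    by (simp add: filter_sort filter_map comp_def del: upt_Suc)
  also have "\<dots> = card {l \<in> {1..k}. v \<le> p l}"
    by (subst distinct_card[symmetric]) (auto simp: atLeastLessThanSuc_atLeastAtMost simp del: upt_Suc)
  finally have "v \<le> ?s ! (length ?s - m)"
    using assms by (intro sorted_nth_ge_if_length_filter_ge) simp_all
  moreover have "card {l \<in> {1..k}. v \<le> p l} \<le> card {1..k}"
    by (intro card_mono) auto
  ultimately show ?thesis
    using assms by (simp add: ord_stat_eq_nth_sort)
qed

lemma ord_stat_le_argmax:
  assumes "i \<in> argmax_set k p" "1 \<le> m" "m \<le> k"
  shows "ord_stat k p m \<le> p i"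
  using ord_stat_in_image[OF assms(2,3), of p] assms(1) unfolding argmax_set_def by auto

lemma ord_stat_1_eq_argmax:
  assumes "i \<in> argmax_set k p"
  shows "ord_stat k p 1 = p i"
proof (rule antisym)
  have "i \<in> {1..k}"
    using assms unfolding argmax_set_def by simp
  then show "ord_stat k p 1 \<le> p i"
    using assms by (intro ord_stat_le_argmax) auto
  have "{i} \<subseteq> {l \<in> {1..k}. p i \<le> p l}"
    using \<open>i \<in> {1..k}\<close> by simp
  then have "1 \<le> card {l \<in> {1..k}. p i \<le> p l}"
    using card_mono[of "{l \<in> {1..k}. p i \<le> p l}" "{i}"] by simp
  then show "p i \<le> ord_stat k p 1"
    by (intro ord_stat_ge) auto
qed

lemma ord_stat_2_ge_non_argmax:
  assumes "i \<in> argmax_set k p" "j \<in> {1..k}" "j \<noteq> i"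
  shows "p j \<le> ord_stat k p 2"
proof (rule ord_stat_ge)
  have "{i, j} \<subseteq> {l \<in> {1..k}. p j \<le> p l}"
    using assms unfolding argmax_set_def by auto
  then show "2 \<le> card {l \<in> {1..k}. p j \<le> p l}"
    using card_mono[of "{l \<in> {1..k}. p j \<le> p l}" "{i, j}"] assms(3) by simp
qed simp

theorem mainTheorem2:
  fixes k :: nat and p q :: "nat \<Rightarrow> real"
  assumes "k \<ge> 2"
    and "is_distribution k p" and "is_distribution k q"
    and "argmax_set k p \<noteq> argmax_set k q"
  shows "hellinger_sq k q p \<ge>
    1 - sqrt ((2 - (sqrt (ord_stat k p 1) - sqrt (ord_stat k p 2))^2) / 2)"
proof -
  have "1 \<le> k"
    using assms(1) by simp
  then obtain i j where i: "i \<in> argmax_set k p" and j: "j \<in> {1..k}" "j \<noteq> i" and "q i \<le> q j"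
    using assms(4) by (rule argmax_set_mismatch)
  have affinity: "(\<Sum>l=1..k. sqrt (p l * q l)) \<le> sqrt (1 - (sqrt (p i) - sqrt (p j))\<^sup>2 / 2)"
    using i j assms(2,3) \<open>q i \<le> q j\<close>
    by (intro bhattacharyya_le_opposite_pair) (auto simp: argmax_set_def)
  have "(sqrt (ord_stat k p 1) - sqrt (ord_stat k p 2))\<^sup>2 \<le> (sqrt (p i) - sqrt (p j))\<^sup>2"
  proof (rule power_mono)
    show "0 \<le> sqrt (ord_stat k p 1) - sqrt (ord_stat k p 2)"
      using ord_stat_le_argmax[OF i, of 2] ord_stat_1_eq_argmax[OF i] assms(1) by simp
    show "sqrt (ord_stat k p 1) - sqrt (ord_stat k p 2) \<le> sqrt (p i) - sqrt (p j)"
      using ord_stat_1_eq_argmax[OF i] ord_stat_2_ge_non_argmax[OF i j] by simp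
  qed
  then have "sqrt (1 - (sqrt (p i) - sqrt (p j))\<^sup>2 / 2)
      \<le> sqrt ((2 - (sqrt (ord_stat k p 1) - sqrt (ord_stat k p 2))\<^sup>2) / 2)"
    by (intro real_sqrt_le_mono) simp
  with affinity show ?thesis
    unfolding hellinger_sq_def by linarith
qed

end
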